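(* Let $p\in[1,\infty)$ and $w$ a weight sequence. A set $A\subset L_{p,w}$ is precompact if and only if it is bounded in $\|\cdot\|_{p,w}$ and $$\forall\varepsilon>0\ \exists N\in\mathbb{N}\ \forall a\in A\ \forall i\ge N:\ \sum_{j=i+1}^\infty|a_j|^p\, w_{(\sigma^a)^{-1}_j}<\varepsilon.$$
   Context: A weight sequence is a sequence $w=(w_i)$ of positive reals with $w_1=1\ge w_2\ge\dots$, $w_i\to0$, and $\sum_i w_i=+\infty$. For a real sequence $a$, $\|a\|_{p,w}=\sup_{\sigma}\big(\sum_{i=1}^\infty |a_{\sigma_i}|^p w_i\big)^{1/p}$ over all permutations $\sigma$ of $\mathbb{N}$; $L_{p,w}$ is the set of real sequences with finite norm. For $a\in L_{p,w}$, $\sigma^a:\mathbb{N}\to\mathbb{N}$ is defined recursively: $\sigma^a_i$ is the element $j$ of $\mathbb{N}\setminus\{\sigma^a_1,\dots,\sigma^a_{i-1}\}$ with $|a_j|$ maximal, taking the smallest such index in case of ties (well defined for $a\in L_{p,w}$, injective, with $|a_{\sigma^a_i}|$ nonincreasing). $(\sigma^a)^{-1}$ is its inverse on $\sigma^a(\mathbb{N})$, with the convention $w_{(\sigma^a)^{-1}_j}:=0$ if $j\notin\sigma^a(\mathbb{N})$. A set is precompact if for every $\varepsilon>0$ it has a finite cover by sets of radius at most $\varepsilon$. *)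

theory Defs
  imports "HOL-Analysis.Analysis"
begin

text \<open>Indexing convention: sequences are indexed from 0 (index k here corresponds to
index k+1 in the paper).\<close>

definition weight_seq :: "(nat \<Rightarrow> real) \<Rightarrow> bool" where
  "weight_seq w \<longleftrightarrow> (\<forall>i. w i > 0) \<and> w 0 = 1 \<and> antimono w \<and> w \<longlonglongrightarrow> 0
     \<and> \<not> summable w"

definition pw_pow :: "real \<Rightarrow> (nat \<Rightarrow> real) \<Rightarrow> (nat \<Rightarrow> real) \<Rightarrow> ennreal" where
  "pw_pow p w a = (SUP \<sigma> \<in> {\<sigma>::nat \<Rightarrow> nat. bij \<sigma>}. (\<Sum>i. ennreal (\<bar>a (\<sigma> i)\<bar> powr p * w i)))"

definition Lpw :: "real \<Rightarrow> (nat \<Rightarrow> real) \<Rightarrow> (nat \<Rightarrow> real) set" where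
  "Lpw p w = {a. pw_pow p w a < \<infinity>}"

definition normpw :: "real \<Rightarrow> (nat \<Rightarrow> real) \<Rightarrow> (nat \<Rightarrow> real) \<Rightarrow> real" where
  "normpw p w a = (enn2real (pw_pow p w a)) powr (1 / p)"

definition pick :: "(nat \<Rightarrow> real) \<Rightarrow> nat set \<Rightarrow> nat" where
  "pick a U = (LEAST j. j \<notin> U \<and> (\<forall>k. k \<notin> U \<longrightarrow> \<bar>a k\<bar> \<le> \<bar>a j\<bar>))"

primrec used :: "(nat \<Rightarrow> real) \<Rightarrow> nat \<Rightarrow> nat set" where
  "used a 0 = {}"
| "used a (Suc n) = insert (pick a (used a n)) (used a n)"

text \<open>The decreasing rearrangement map sigma^a: sigma_a a i = index of the i-th largest entry.\<close>
definition sigma_a :: "(nat \<Rightarrow> real) \<Rightarrow> nat \<Rightarrow> nat" where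
  "sigma_a a i = pick a (used a i)"

definition w_inv :: "(nat \<Rightarrow> real) \<Rightarrow> (nat \<Rightarrow> real) \<Rightarrow> nat \<Rightarrow> real" where
  "w_inv w a j = (if j \<in> range (sigma_a a) then w (THE i. sigma_a a i = j) else 0)"

definition precompact_pw :: "real \<Rightarrow> (nat \<Rightarrow> real) \<Rightarrow> (nat \<Rightarrow> real) set \<Rightarrow> bool" where
  "precompact_pw p w A \<longleftrightarrow> (\<forall>\<epsilon>>0. \<exists>F. finite F \<and> F \<subseteq> Lpw p w \<and>
       A \<subseteq> (\<Union>c\<in>F. {b \<in> Lpw p w. normpw p w (b - c) \<le> \<epsilon>}))"

definition bounded_pw :: "real \<Rightarrow> (nat \<Rightarrow> real) \<Rightarrow> (nat \<Rightarrow> real) set \<Rightarrow> bool" where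
  "bounded_pw p w A \<longleftrightarrow> (\<exists>M. \<forall>a\<in>A. normpw p w a \<le> M)"

end

(*
  For a sequence a in L_{p,w} (which tends to 0) the greedy rearrangement sigma^a realises the
  supremum defining the norm: by a majorization argument and Abel summation, no rearrangement of
  |a|^p beats the decreasing one against decreasing weights, so
  pw_pow a = sum_k |a (sigma^a k)|^p w k, and the tail sum of the statement is the part of this series carried by the indices j > i.
  The p-th power of the norm is a quasi-norm with constant 2^p.

  If A is precompact, its tails are controlled by the tails of the finitely many centres of a
  net. Conversely, a uniform bound together with uniformly small greedy tails makes the entries
  of all a in A uniformly small beyond some index, and beyond that index the full tails are then
  uniformly small as well; the finitely many remaining coordinates, which are uniformly bounded,
  are approximated by a finite grid.
*)
theory Submission
  imports Defs
begin

section \<open>The greedy rearrangement\<close>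

lemma finite_abs_ge_if_tendsto_zero:
  fixes a :: "nat \<Rightarrow> real"
  assumes "a \<longlonglongrightarrow> 0" and "0 < \<delta>"
  shows "finite {k. \<delta> \<le> \<bar>a k\<bar>}"
proof -
  have "\<forall>\<^sub>F k in cofinite. \<bar>a k\<bar> < \<delta>"
    using assms unfolding cofinite_eq_sequentially tendsto_iff by (auto simp: dist_real_def)
  then show ?thesis by (simp add: eventually_cofinite not_less)
qed

lemma ex_max_abs_outside_finite:
  fixes a :: "nat \<Rightarrow> real"
  assumes a0: "a \<longlonglongrightarrow> 0" and "finite U"
  shows "\<exists>j. j \<notin> U \<and> (\<forall>k. k \<notin> U \<longrightarrow> \<bar>a k\<bar> \<le> \<bar>a j\<bar>)"
proof (cases "\<exists>k. k \<notin> U \<and> a k \<noteq> 0")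
  case False
  obtain j where "j \<notin> U" using \<open>finite U\<close> by (metis ex_new_if_finite infinite_UNIV_nat)
  with False show ?thesis by (intro exI[of _ j]) auto
next
  case True
  then obtain k1 where k1: "k1 \<notin> U" "a k1 \<noteq> 0" by blast
  define S where "S = {k. \<bar>a k1\<bar> \<le> \<bar>a k\<bar>} - U"
  have "finite S"
    unfolding S_def using finite_abs_ge_if_tendsto_zero[OF a0, of "\<bar>a k1\<bar>"] k1 by simp
  moreover have "k1 \<in> S" using k1 by (simp add: S_def)
  ultimately obtain j where j: "j \<in> S" "\<bar>a j\<bar> = Max ((\<lambda>k. \<bar>a k\<bar>) ` S)"
    by (metis (no_types, lifting) Max_in empty_iff finite_imageI image_iff)
  have "\<bar>a k\<bar> \<le> \<bar>a j\<bar>" if "k \<notin> U" for k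
  proof (cases "k \<in> S")
    case True
    then show ?thesis using j \<open>finite S\<close> by simp
  next
    case False
    then show ?thesis using j that by (auto simp: S_def)
  qed
  with j show ?thesis by (auto simp: S_def)
qed

lemma
  fixes a :: "nat \<Rightarrow> real"
  assumes "a \<longlonglongrightarrow> 0" and "finite U"
  shows pick_notin: "pick a U \<notin> U"
    and abs_le_pick: "k \<notin> U \<Longrightarrow> \<bar>a k\<bar> \<le> \<bar>a (pick a U)\<bar>"
proof -
  have "pick a U \<notin> U \<and> (\<forall>k. k \<notin> U \<longrightarrow> \<bar>a k\<bar> \<le> \<bar>a (pick a U)\<bar>)"
    unfolding pick_def by (rule LeastI_ex) (rule ex_max_abs_outside_finite[OF assms])
  then show "pick a U \<notin> U" and "k \<notin> U \<Longrightarrow> \<bar>a k\<bar> \<le> \<bar>a (pick a U)\<bar>" by auto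
qed

lemma used_eq_image: "used a n = sigma_a a ` {..<n}"
  by (induction n) (auto simp: sigma_a_def lessThan_Suc)

context
  fixes a :: "nat \<Rightarrow> real"
  assumes a0: "a \<longlonglongrightarrow> 0"
begin

lemma sigma_a_notin_used: "sigma_a a n \<notin> used a n"
  unfolding sigma_a_def by (rule pick_notin[OF a0]) (simp add: used_eq_image)

lemma abs_le_sigma_a: "k \<notin> used a n \<Longrightarrow> \<bar>a k\<bar> \<le> \<bar>a (sigma_a a n)\<bar>"
  unfolding sigma_a_def by (rule abs_le_pick[OF a0]) (simp_all add: used_eq_image)

lemma inj_sigma_a: "inj (sigma_a a)"
proof (rule linorder_injI)
  fix m n :: nat assume "m < n"
  then have "sigma_a a m \<in> used a n" by (auto simp: used_eq_image)
  then show "sigma_a a m \<noteq> sigma_a a n" using sigma_a_notin_used[of n] by auto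
qed

lemma card_used: "card (used a n) = n"
  using inj_sigma_a by (simp add: used_eq_image card_image inj_on_subset)

lemma abs_le_if_used: "j \<in> used a n \<Longrightarrow> k \<notin> used a n \<Longrightarrow> \<bar>a k\<bar> \<le> \<bar>a j\<bar>"
  by (auto simp: used_eq_image intro!: abs_le_sigma_a)

lemma abs_sigma_a_antimono: "m \<le> n \<Longrightarrow> \<bar>a (sigma_a a n)\<bar> \<le> \<bar>a (sigma_a a m)\<bar>"
  using sigma_a_notin_used[of n] by (intro abs_le_sigma_a) (auto simp: used_eq_image)

lemma in_range_sigma_a:
  assumes "a j \<noteq> 0"
  shows "j \<in> range (sigma_a a)"
proof (rule ccontr)
  assume "j \<notin> range (sigma_a a)"
  then have "range (sigma_a a) \<subseteq> {k. \<bar>a j\<bar> \<le> \<bar>a k\<bar>}"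
    by (auto simp: used_eq_image intro!: abs_le_sigma_a)
  moreover have "finite {k. \<bar>a j\<bar> \<le> \<bar>a k\<bar>}"
    using assms by (intro finite_abs_ge_if_tendsto_zero[OF a0]) simp
  ultimately show False
    using inj_sigma_a by (metis finite_imageD finite_subset infinite_UNIV_nat)
qed

end

section \<open>A rearrangement inequality\<close>

lemma sum_le_sum_if_dominated:
  fixes f :: "'a \<Rightarrow> real"
  assumes "finite S" and "finite U" and "card S \<le> card U"
    and dom: "\<And>j k. j \<in> U \<Longrightarrow> k \<in> S - U \<Longrightarrow> f k \<le> f j" and nonneg: "\<And>j. j \<in> U \<Longrightarrow> 0 \<le> f j"
  shows "sum f S \<le> sum f U"
proof -
  have "card (S - U) \<le> card (U - S)"
    using assms(1-3) by (simp add: card_Diff_subset_Int Int_commute)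
  then obtain h where h: "h ` (S - U) \<subseteq> U - S" "inj_on h (S - U)"
    using card_le_inj[of "S - U" "U - S"] assms(1,2) by auto
  have "sum f (S - U) \<le> sum (f \<circ> h) (S - U)"
    using h(1) by (intro sum_mono) (auto intro: dom)
  also have "\<dots> = sum f (h ` (S - U))" by (simp add: sum.reindex h(2))
  also have "\<dots> \<le> sum f (U - S)" using h(1) assms(2) nonneg by (intro sum_mono2) auto
  finally have "sum f (S - U) \<le> sum f (U - S)" .
  then show ?thesis
    using sum.Int_Diff[OF assms(1), of f U] sum.Int_Diff[OF assms(2), of f S] by (simp add: Int_commute)
qed

lemma prefix_sum_mult_le_sum_mult:
  fixes d v :: "nat \<Rightarrow> real"
  assumes prefix: "\<And>l. l < n \<Longrightarrow> 0 \<le> (\<Sum>i\<le>l. d i)" and v: "\<And>i. v (Suc i) \<le> v i"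
  shows "(\<Sum>i\<le>n. d i) * v n \<le> (\<Sum>i\<le>n. d i * v i)"
  using prefix
proof (induction n)
  case (Suc n)
  have "(\<Sum>i\<le>Suc n. d i) * v (Suc n) = (\<Sum>i\<le>n. d i) * v (Suc n) + d (Suc n) * v (Suc n)"
    by (simp add: algebra_simps)
  also have "\<dots> \<le> (\<Sum>i\<le>n. d i) * v n + d (Suc n) * v (Suc n)"
    using Suc.prems[of n] v[of n] by (simp add: mult_left_mono)
  also have "\<dots> \<le> (\<Sum>i\<le>Suc n. d i * v i)" using Suc by simp
  finally show ?case .
qed simp

lemma weighted_sum_le_if_prefix_sums_le:
  fixes u u' v :: "nat \<Rightarrow> real"
  assumes prefix: "\<And>l. l < K \<Longrightarrow> (\<Sum>i\<le>l. u i) \<le> (\<Sum>i\<le>l. u' i)"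
    and v: "\<And>i. v (Suc i) \<le> v i" and nonneg: "\<And>i. 0 \<le> v i"
  shows "(\<Sum>i<K. u i * v i) \<le> (\<Sum>i<K. u' i * v i)"
proof (cases K)
  case (Suc n)
  have "0 \<le> (\<Sum>i\<le>n. u' i - u i) * v n"
    using prefix[of n] nonneg[of n] Suc by (simp add: sum_subtractf)
  also have "\<dots> \<le> (\<Sum>i\<le>n. (u' i - u i) * v i)"
    using prefix Suc by (intro prefix_sum_mult_le_sum_mult v) (simp add: sum_subtractf)
  finally show ?thesis
    using Suc by (simp add: lessThan_Suc_atMost sum_subtractf left_diff_distrib)
qed simp

lemma sum_lessThan_add_split:
  fixes g :: "nat \<Rightarrow> 'a::comm_monoid_add"
  shows "(\<Sum>k<D + K. g k) = (\<Sum>k<D. g k) + (\<Sum>i<K. g (i + D))"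
  by (induction K) (simp_all add: ac_simps)

lemma sum_le_greedy_prefix_sum:
  fixes a :: "nat \<Rightarrow> real" and H S :: "nat set" and p :: real
  defines "f \<equiv> \<lambda>j. if j \<in> H then 0 else \<bar>a j\<bar> powr p"
  assumes a0: "a \<longlonglongrightarrow> 0" and "0 \<le> p" and "finite S" and "finite H" and "card S + card H \<le> n"
  shows "sum f S \<le> (\<Sum>k<n. f (sigma_a a k))"
proof -
  have "sum f S = sum f (S - H)"
    by (rule sum.mono_neutral_right) (auto simp: f_def \<open>finite S\<close>)
  also have "\<dots> \<le> sum f (used a n - H)"
  proof (rule sum_le_sum_if_dominated)
    have "card (S - H) \<le> card (used a n) - card H"
      using card_used[OF a0, of n] assms(6) card_mono[of S "S - H"] by (simp add: \<open>finite S\<close>)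
    also have "\<dots> \<le> card (used a n - H)" by (rule diff_card_le_card_Diff[OF \<open>finite H\<close>])
    finally show "card (S - H) \<le> card (used a n - H)" .
    show "f k \<le> f j" if "j \<in> used a n - H" "k \<in> (S - H) - (used a n - H)" for j k
      using that abs_le_if_used[OF a0, of j n k] \<open>0 \<le> p\<close> by (auto simp: f_def intro: powr_mono2)
  qed (auto simp: f_def \<open>finite S\<close> used_eq_image)
  also have "\<dots> = sum f (used a n)"
    by (rule sum.mono_neutral_left) (auto simp: f_def used_eq_image)
  also have "\<dots> = (\<Sum>k<n. f (sigma_a a k))"
    using inj_sigma_a[OF a0] by (simp add: used_eq_image sum.reindex inj_on_subset)
  finally show ?thesis .
qed

lemma shifted_weighted_sum_le_greedy_sum:
  fixes a w :: "nat \<Rightarrow> real" and \<sigma> :: "nat \<Rightarrow> nat" and H :: "nat set" and p :: real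
  defines "f \<equiv> \<lambda>j. if j \<in> H then 0 else \<bar>a j\<bar> powr p"
  assumes a0: "a \<longlonglongrightarrow> 0" and "0 \<le> p" and "inj \<sigma>" and "finite H" and "card H \<le> D"
    and "antimono w" and "\<And>i. 0 \<le> w i"
  shows "(\<Sum>i<K. f (\<sigma> i) * w (i + D)) \<le> (\<Sum>k<D + K. f (sigma_a a k) * w k)"
proof -
  \<comment> \<open>\<open>u\<close> is \<open>f \<circ> \<sigma>\<close> delayed by D places; Abel summation reduces the claim to its prefix sums.\<close>
  define u where "u m = (if m < D then 0 else f (\<sigma> (m - D)))" for m
  have "(\<Sum>i<K. f (\<sigma> i) * w (i + D)) = (\<Sum>m<D + K. u m * w m)"
    by (simp add: sum_lessThan_add_split u_def)
  also have "\<dots> \<le> (\<Sum>k<D + K. f (sigma_a a k) * w k)"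
  proof (rule weighted_sum_le_if_prefix_sums_le)
    show "(\<Sum>m\<le>l. u m) \<le> (\<Sum>m\<le>l. f (sigma_a a m))" for l
    proof (cases "l < D")
      case True
      then show ?thesis by (simp add: u_def f_def sum_nonneg)
    next
      case False
      then have "(\<Sum>m\<le>l. u m) = (\<Sum>i<Suc l - D. f (\<sigma> i))"
        using sum_lessThan_add_split[of u D "Suc l - D"] by (simp add: u_def flip: lessThan_Suc_atMost)
      also have "\<dots> = sum f (\<sigma> ` {..<Suc l - D})"
        using \<open>inj \<sigma>\<close> by (simp add: sum.reindex inj_on_subset)
      also have "\<dots> \<le> (\<Sum>m<Suc l. f (sigma_a a m))"
        unfolding f_def using \<open>inj \<sigma>\<close> \<open>card H \<le> D\<close> False
        by (intro sum_le_greedy_prefix_sum a0 \<open>0 \<le> p\<close> \<open>finite H\<close>) (auto simp: card_image inj_on_subset)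
      finally show ?thesis by (simp add: lessThan_Suc_atMost)
    qed
  qed (use assms in \<open>auto simp: antimono_def\<close>)
  finally show ?thesis .
qed

section \<open>The norm is attained by the greedy rearrangement\<close>

lemma extend_inj_on_lessThan_to_bij:
  fixes g :: "nat \<Rightarrow> nat"
  assumes "inj_on g {..<K}"
  obtains \<sigma> where "bij \<sigma>" and "\<And>i. i < K \<Longrightarrow> \<sigma> i = g i"
proof -
  define C where "C = - g ` {..<K}"
  have "infinite C"
    using finite_imageI[of "{..<K}" g]
    by (metis C_def Compl_partition2 finite_UnI finite_lessThan infinite_UNIV_nat)
  define \<sigma> where "\<sigma> i = (if i < K then g i else enumerate C (i - K))" for i
  have "bij_betw \<sigma> {..<K} (g ` {..<K})"
    using bij_betw_imageI[OF assms] by (rule bij_betw_cong[THEN iffD1, rotated]) (auto simp: \<sigma>_def)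
  moreover have "bij_betw \<sigma> {K..} C"
  proof -
    have "bij_betw (\<lambda>i. i - K) {K..} UNIV"
      by (rule bij_betw_byWitness[where f' = "\<lambda>i. i + K"]) auto
    then have "bij_betw (enumerate C \<circ> (\<lambda>i. i - K)) {K..} C"
      using bij_enumerate[OF \<open>infinite C\<close>] by (rule bij_betw_trans)
    then show ?thesis by (rule bij_betw_cong[THEN iffD1, rotated]) (simp add: \<sigma>_def)
  qed
  ultimately have "bij_betw \<sigma> ({..<K} \<union> {K..}) (g ` {..<K} \<union> C)"
    by (rule bij_betw_combine) (simp add: C_def)
  moreover have "{..<K} \<union> {K..} = UNIV" and "g ` {..<K} \<union> C = UNIV" by (auto simp: C_def)
  ultimately show ?thesis using that by (simp add: \<sigma>_def)
qed

lemma weighted_sum_comp_inj_le_pw_pow: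
  fixes b w :: "nat \<Rightarrow> real" and g :: "nat \<Rightarrow> nat"
  assumes "inj g"
  shows "(\<Sum>i. ennreal (\<bar>b (g i)\<bar> powr p * w i)) \<le> pw_pow p w b"
  unfolding suminf_eq_SUP
proof (rule SUP_least)
  fix K
  obtain \<sigma> where "bij \<sigma>" and \<sigma>: "\<And>i. i < K \<Longrightarrow> \<sigma> i = g i"
    using extend_inj_on_lessThan_to_bij[of g K] assms inj_on_subset by blast
  have "(\<Sum>i<K. ennreal (\<bar>b (g i)\<bar> powr p * w i)) = (\<Sum>i<K. ennreal (\<bar>b (\<sigma> i)\<bar> powr p * w i))"
    using \<sigma> by simp
  also have "\<dots> \<le> (\<Sum>i. ennreal (\<bar>b (\<sigma> i)\<bar> powr p * w i))"
    by (rule sum_le_suminf) auto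
  also have "\<dots> \<le> pw_pow p w b"
    unfolding pw_pow_def using \<open>bij \<sigma>\<close> by (intro SUP_upper) simp
  finally show "(\<Sum>i<K. ennreal (\<bar>b (g i)\<bar> powr p * w i)) \<le> pw_pow p w b" .
qed

lemma suminf_ennreal_comp_inj:
  fixes f :: "nat \<Rightarrow> ennreal"
  assumes "inj g" and "\<And>y. y \<notin> range g \<Longrightarrow> f y = 0"
  shows "(\<Sum>k. f (g k)) = (\<Sum>y. f y)"
proof -
  have "(\<Sum>k. f (g k)) = (\<integral>\<^sup>+k. f (g k) \<partial>count_space UNIV)"
    by (rule nn_integral_count_space_nat[symmetric])
  also have "\<dots> = (\<integral>\<^sup>+y. f y \<partial>count_space (range g))"
    using assms(1) by (intro nn_integral_bij_count_space) (simp add: bij_betw_def)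
  also have "\<dots> = (\<integral>\<^sup>+y. f y \<partial>count_space UNIV)"
    using assms(2) by (subst nn_integral_count_space_indicator)
      (auto intro!: nn_integral_cong simp: indicator_def)
  also have "\<dots> = (\<Sum>y. f y)" by (rule nn_integral_count_space_nat)
  finally show ?thesis .
qed

lemma ennreal_sum_le_suminf: "(\<And>i. 0 \<le> f i) \<Longrightarrow> ennreal (\<Sum>i<n. f i) \<le> (\<Sum>i. ennreal (f i))"
  by (simp add: sum_le_suminf flip: sum_ennreal)

definition greedy_sum :: "real \<Rightarrow> (nat \<Rightarrow> real) \<Rightarrow> (nat \<Rightarrow> real) \<Rightarrow> (nat \<Rightarrow> real) \<Rightarrow> ennreal" where
  "greedy_sum p w a b = (\<Sum>k. ennreal (\<bar>b (sigma_a a k)\<bar> powr p * w k))"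

lemma greedy_sum_le_pw_pow: "a \<longlonglongrightarrow> 0 \<Longrightarrow> greedy_sum p w a b \<le> pw_pow p w b"
  unfolding greedy_sum_def by (rule weighted_sum_comp_inj_le_pw_pow[OF inj_sigma_a])

lemma pw_pow_le_greedy_sum:
  fixes a w :: "nat \<Rightarrow> real"
  assumes a0: "a \<longlonglongrightarrow> 0" and "antimono w" and w: "\<And>i. 0 \<le> w i" and "0 \<le> p"
  shows "pw_pow p w a \<le> greedy_sum p w a a"
  unfolding pw_pow_def
proof (rule SUP_least)
  fix \<sigma> :: "nat \<Rightarrow> nat" assume "\<sigma> \<in> {\<sigma>. bij \<sigma>}"
  then have "inj \<sigma>" by (simp add: bij_is_inj)
  show "(\<Sum>i. ennreal (\<bar>a (\<sigma> i)\<bar> powr p * w i)) \<le> greedy_sum p w a a"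
    unfolding suminf_eq_SUP[of "\<lambda>i. ennreal (\<bar>a (\<sigma> i)\<bar> powr p * w i)"]
  proof (rule SUP_least)
    fix K
    have "(\<Sum>i<K. \<bar>a (\<sigma> i)\<bar> powr p * w i) \<le> (\<Sum>k<K. \<bar>a (sigma_a a k)\<bar> powr p * w k)"
      using shifted_weighted_sum_le_greedy_sum[OF a0 \<open>0 \<le> p\<close> \<open>inj \<sigma>\<close> finite.emptyI _ \<open>antimono w\<close> w,
          of 0 K] by simp
    then have "(\<Sum>i<K. ennreal (\<bar>a (\<sigma> i)\<bar> powr p * w i))
        \<le> ennreal (\<Sum>k<K. \<bar>a (sigma_a a k)\<bar> powr p * w k)"
      using w by (simp add: ennreal_leI)
    also have "\<dots> \<le> greedy_sum p w a a"
      unfolding greedy_sum_def using w by (intro ennreal_sum_le_suminf) simp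
    finally show "(\<Sum>i<K. ennreal (\<bar>a (\<sigma> i)\<bar> powr p * w i)) \<le> greedy_sum p w a a" .
  qed
qed

lemma pw_pow_eq_greedy_sum:
  fixes a w :: "nat \<Rightarrow> real"
  assumes "a \<longlonglongrightarrow> 0" and "antimono w" and "\<And>i. 0 \<le> w i" and "0 \<le> p"
  shows "pw_pow p w a = greedy_sum p w a a"
  using pw_pow_le_greedy_sum[OF assms] greedy_sum_le_pw_pow[OF assms(1)] by (rule antisym)

lemma weight_seq_pos: "weight_seq w \<Longrightarrow> 0 < w i"
  by (simp add: weight_seq_def)

lemma weight_seq_nonneg: "weight_seq w \<Longrightarrow> 0 \<le> w i"
  by (simp add: weight_seq_def less_imp_le)

lemma weight_seq_antimono: "weight_seq w \<Longrightarrow> antimono w"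
  by (simp add: weight_seq_def)

lemma weight_seq_le_one: "weight_seq w \<Longrightarrow> w i \<le> 1"
  unfolding weight_seq_def by (metis antimonoD le0)

lemma weight_seq_partial_sums_unbounded:
  assumes "weight_seq w"
  obtains r where "X < (\<Sum>k<r. w k)"
proof -
  have "\<not> summable w" using assms by (simp add: weight_seq_def)
  then have "\<not> (\<forall>r. (\<Sum>k<r. w k) \<le> X)"
    using summableI_nonneg_bounded[of w X] weight_seq_nonneg[OF assms] by blast
  then show ?thesis using that by (auto simp: not_le)
qed

lemma powr_abs_add_le:
  fixes u v p :: real
  assumes "0 \<le> p"
  shows "\<bar>u + v\<bar> powr p \<le> 2 powr p * (\<bar>u\<bar> powr p + \<bar>v\<bar> powr p)"
proof -
  have "\<bar>u + v\<bar> powr p \<le> (2 * max \<bar>u\<bar> \<bar>v\<bar>) powr p"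
    using assms by (intro powr_mono2) auto
  also have "\<dots> = 2 powr p * max \<bar>u\<bar> \<bar>v\<bar> powr p" by (simp add: powr_mult)
  also have "\<dots> \<le> 2 powr p * (\<bar>u\<bar> powr p + \<bar>v\<bar> powr p)" by (simp add: max_def)
  finally show ?thesis .
qed

lemma pw_pow_mono:
  fixes x y w :: "nat \<Rightarrow> real"
  assumes "\<And>j. \<bar>x j\<bar> \<le> \<bar>y j\<bar>" and "\<And>i. 0 \<le> w i" and "0 \<le> p"
  shows "pw_pow p w x \<le> pw_pow p w y"
  unfolding pw_pow_def
  using assms by (intro SUP_mono' suminf_le ennreal_leI mult_right_mono powr_mono2) auto

lemma pw_pow_uminus: "pw_pow p w (- x) = pw_pow p w x"
  by (simp add: pw_pow_def)

lemma pw_pow_add_le: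
  fixes x y w :: "nat \<Rightarrow> real"
  assumes w: "\<And>i. 0 \<le> w i" and "0 \<le> p"
  shows "pw_pow p w (\<lambda>j. x j + y j) \<le> ennreal (2 powr p) * (pw_pow p w x + pw_pow p w y)"
  unfolding pw_pow_def[of p w "\<lambda>j. x j + y j"]
proof (rule SUP_least)
  fix \<sigma> :: "nat \<Rightarrow> nat" assume "\<sigma> \<in> {\<sigma>. bij \<sigma>}"
  let ?s = "\<lambda>b i. ennreal (\<bar>b (\<sigma> i)\<bar> powr p * w i)"
  have "?s (\<lambda>j. x j + y j) i \<le> ennreal (2 powr p) * (?s x i + ?s y i)" for i
  proof -
    have "\<bar>x (\<sigma> i) + y (\<sigma> i)\<bar> powr p * w i
        \<le> 2 powr p * (\<bar>x (\<sigma> i)\<bar> powr p * w i + \<bar>y (\<sigma> i)\<bar> powr p * w i)"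
      using powr_abs_add_le[OF \<open>0 \<le> p\<close>, of "x (\<sigma> i)" "y (\<sigma> i)"] w[of i]
      by (simp add: mult_right_mono flip: distrib_right mult.assoc)
    then have "?s (\<lambda>j. x j + y j) i
        \<le> ennreal (2 powr p * (\<bar>x (\<sigma> i)\<bar> powr p * w i + \<bar>y (\<sigma> i)\<bar> powr p * w i))"
      by (simp add: ennreal_leI)
    also have "\<dots> = ennreal (2 powr p) * (?s x i + ?s y i)"
      using w by (simp add: ennreal_mult)
    finally show ?thesis .
  qed
  then have "(\<Sum>i. ?s (\<lambda>j. x j + y j) i) \<le> (\<Sum>i. ennreal (2 powr p) * (?s x i + ?s y i))"
    by (intro suminf_le) auto
  also have "\<dots> = ennreal (2 powr p) * ((\<Sum>i. ?s x i) + (\<Sum>i. ?s y i))"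
    by (simp add: suminf_add)
  also have "\<dots> \<le> ennreal (2 powr p) * (pw_pow p w x + pw_pow p w y)"
    unfolding pw_pow_def using \<open>\<sigma> \<in> _\<close> by (intro mult_left_mono add_mono SUP_upper) auto
  finally show "(\<Sum>i. ?s (\<lambda>j. x j + y j) i) \<le> ennreal (2 powr p) * (pw_pow p w x + pw_pow p w y)" .
qed

lemma pw_pow_add_le_real:
  fixes x y w :: "nat \<Rightarrow> real"
  assumes "\<And>i. 0 \<le> w i" and "0 \<le> p"
    and "pw_pow p w x \<le> ennreal s" and "pw_pow p w y \<le> ennreal t" and "0 \<le> s" and "0 \<le> t"
  shows "pw_pow p w (\<lambda>j. x j + y j) \<le> ennreal (2 powr p * (s + t))"
proof -
  have "pw_pow p w (\<lambda>j. x j + y j) \<le> ennreal (2 powr p) * (pw_pow p w x + pw_pow p w y)"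
    by (rule pw_pow_add_le[OF assms(1,2)])
  also have "\<dots> \<le> ennreal (2 powr p) * (ennreal s + ennreal t)"
    using assms(3,4) by (intro mult_left_mono add_mono) auto
  also have "\<dots> = ennreal (2 powr p * (s + t))"
    using assms(5,6) by (simp add: ennreal_mult)
  finally show ?thesis .
qed

lemma Lpw_diff:
  assumes "weight_seq w" and "0 \<le> p" and "a \<in> Lpw p w" and "c \<in> Lpw p w"
  shows "a - c \<in> Lpw p w"
proof -
  have "pw_pow p w (a - c) = pw_pow p w (\<lambda>j. a j + (- c) j)" by (simp add: fun_diff_def)
  also have "\<dots> \<le> ennreal (2 powr p) * (pw_pow p w a + pw_pow p w c)"
    using pw_pow_add_le[OF weight_seq_nonneg[OF assms(1)] assms(2), where x = a and y = "- c"]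
    by (simp add: pw_pow_uminus)
  also have "\<dots> < \<infinity>" using assms(3,4) by (simp add: Lpw_def ennreal_mult_less_top)
  finally show ?thesis by (simp add: Lpw_def)
qed

lemma Lpw_tendsto_zero:
  fixes a w :: "nat \<Rightarrow> real"
  assumes w: "weight_seq w" and "0 \<le> p" and "a \<in> Lpw p w"
  shows "a \<longlonglongrightarrow> 0"
proof (rule ccontr)
  assume "\<not> a \<longlonglongrightarrow> 0"
  then obtain \<delta> where "0 < \<delta>" and inf: "infinite {j. \<delta> \<le> \<bar>a j\<bar>}"
    unfolding tendsto_iff cofinite_eq_sequentially[symmetric] eventually_cofinite
    by (auto simp: dist_real_def not_less)
  define g where "g = enumerate {j. \<delta> \<le> \<bar>a j\<bar>}"
  have "inj g" and g: "\<And>i. \<delta> \<le> \<bar>a (g i)\<bar>"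
    using bij_enumerate[OF inf] by (auto simp: g_def bij_betw_def)
  have "(\<Sum>i. ennreal (\<delta> powr p * w i)) \<le> (\<Sum>i. ennreal (\<bar>a (g i)\<bar> powr p * w i))"
    using g \<open>0 < \<delta>\<close> \<open>0 \<le> p\<close> weight_seq_nonneg[OF w]
    by (intro suminf_le ennreal_leI mult_right_mono powr_mono2) auto
  also have "\<dots> \<le> pw_pow p w a" by (rule weighted_sum_comp_inj_le_pw_pow[OF \<open>inj g\<close>])
  also have "\<dots> < \<infinity>" using assms(3) by (simp add: Lpw_def)
  finally have "summable (\<lambda>i. \<delta> powr p * w i)"
    using weight_seq_nonneg[OF w] by (intro summable_suminf_not_top) auto
  then have "summable w" using \<open>0 < \<delta>\<close> by simp
  then show False using w by (simp add: weight_seq_def)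
qed

lemma normpw_le_iff:
  assumes "0 < p" and "0 \<le> \<eta>" and "a \<in> Lpw p w"
  shows "normpw p w a \<le> \<eta> \<longleftrightarrow> pw_pow p w a \<le> ennreal (\<eta> powr p)"
proof -
  define x where "x = enn2real (pw_pow p w a)"
  have "0 \<le> x" and pw: "pw_pow p w a = ennreal x"
    using assms(3) by (auto simp: x_def Lpw_def less_top)
  have "normpw p w a \<le> \<eta> \<longleftrightarrow> x powr (1 / p) \<le> \<eta>" by (simp add: normpw_def x_def)
  also have "\<dots> \<longleftrightarrow> x \<le> \<eta> powr p"
  proof
    assume "x powr (1 / p) \<le> \<eta>"
    then have "(x powr (1 / p)) powr p \<le> \<eta> powr p" using assms(1) by (intro powr_mono2) auto
    then show "x \<le> \<eta> powr p" using \<open>0 \<le> x\<close> assms(1) by (simp add: powr_powr)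
  next
    assume "x \<le> \<eta> powr p"
    then have "x powr (1 / p) \<le> (\<eta> powr p) powr (1 / p)"
      using \<open>0 \<le> x\<close> assms(1) by (intro powr_mono2) auto
    then show "x powr (1 / p) \<le> \<eta>" using assms(1,2) by (simp add: powr_powr)
  qed
  finally show ?thesis by (simp add: pw)
qed

lemma pw_pow_le_sum_if_support:
  fixes c w :: "nat \<Rightarrow> real"
  assumes w: "weight_seq w" and "\<And>j. M < j \<Longrightarrow> c j = 0"
  shows "pw_pow p w c \<le> ennreal (\<Sum>j\<le>M. \<bar>c j\<bar> powr p)"
  unfolding pw_pow_def
proof (rule SUP_least)
  fix \<sigma> :: "nat \<Rightarrow> nat" assume "\<sigma> \<in> {\<sigma>. bij \<sigma>}"
  then have "inj \<sigma>" and "surj \<sigma>" by (simp_all add: bij_is_inj bij_is_surj)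
  have "(\<Sum>i. ennreal (\<bar>c (\<sigma> i)\<bar> powr p * w i)) \<le> (\<Sum>i. ennreal (\<bar>c (\<sigma> i)\<bar> powr p))"
    using weight_seq_le_one[OF w] by (intro suminf_le ennreal_leI) (auto simp: mult_left_le)
  also have "\<dots> = (\<Sum>j. ennreal (\<bar>c j\<bar> powr p))"
    using \<open>inj \<sigma>\<close> \<open>surj \<sigma>\<close> by (intro suminf_ennreal_comp_inj) auto
  also have "\<dots> = (\<Sum>j\<le>M. ennreal (\<bar>c j\<bar> powr p))"
    using assms(2) by (intro suminf_finite) auto
  also have "\<dots> = ennreal (\<Sum>j\<le>M. \<bar>c j\<bar> powr p)" by simp
  finally show "(\<Sum>i. ennreal (\<bar>c (\<sigma> i)\<bar> powr p * w i)) \<le> ennreal (\<Sum>j\<le>M. \<bar>c j\<bar> powr p)" .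
qed

lemma abs_powr_le_pw_pow:
  fixes a w :: "nat \<Rightarrow> real"
  assumes "weight_seq w"
  shows "ennreal (\<bar>a j\<bar> powr p) \<le> pw_pow p w a"
proof -
  define g where "g i = (if i = 0 then j else if i = j then 0 else i)" for i :: nat
  have "inj g" by (auto simp: inj_on_def g_def split: if_splits)
  have "ennreal (\<bar>a j\<bar> powr p) = (\<Sum>i\<in>{0}. ennreal (\<bar>a (g i)\<bar> powr p * w i))"
    using assms by (simp add: g_def weight_seq_def)
  also have "\<dots> \<le> (\<Sum>i. ennreal (\<bar>a (g i)\<bar> powr p * w i))" by (rule sum_le_suminf) auto
  also have "\<dots> \<le> pw_pow p w a" by (rule weighted_sum_comp_inj_le_pw_pow[OF \<open>inj g\<close>])
  finally show ?thesis .
qed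

section \<open>Tails\<close>

definition tail_after :: "nat \<Rightarrow> (nat \<Rightarrow> real) \<Rightarrow> nat \<Rightarrow> real" where
  "tail_after N a j = (if N < j then a j else 0)"

lemma w_inv_sigma_a: "a \<longlonglongrightarrow> 0 \<Longrightarrow> w_inv w a (sigma_a a k) = w k"
  by (simp add: w_inv_def inj_eq[OF inj_sigma_a])

lemma tail_sum_eq_greedy_sum:
  fixes a w :: "nat \<Rightarrow> real"
  assumes a0: "a \<longlonglongrightarrow> 0"
  shows "(\<Sum>j. ennreal (\<bar>a (j + Suc i)\<bar> powr p * w_inv w a (j + Suc i)))
    = greedy_sum p w a (tail_after i a)"
proof -
  define F where "F y = ennreal (\<bar>tail_after i a y\<bar> powr p * w_inv w a y)" for y
  have "(\<Sum>j. ennreal (\<bar>a (j + Suc i)\<bar> powr p * w_inv w a (j + Suc i))) = (\<Sum>j. F (j + Suc i))"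
    by (simp add: F_def tail_after_def)
  also have "\<dots> = (\<Sum>y. F y)"
  proof (rule suminf_ennreal_comp_inj)
    show "F y = 0" if "y \<notin> range (\<lambda>j. j + Suc i)" for y
      using that by (auto simp: F_def tail_after_def intro!: image_eqI[of _ _ "y - Suc i"])
  qed (simp add: inj_on_def)
  also have "\<dots> = (\<Sum>k. F (sigma_a a k))"
    using inj_sigma_a[OF a0] by (rule suminf_ennreal_comp_inj[symmetric]) (simp add: F_def w_inv_def)
  also have "\<dots> = greedy_sum p w a (tail_after i a)"
    by (simp add: F_def greedy_sum_def w_inv_sigma_a[OF a0])
  finally show ?thesis .
qed

lemma weighted_sum_le_shifted_weighted_sum:
  fixes x w :: "nat \<Rightarrow> real"
  assumes x: "\<And>i. 0 \<le> x i" "\<And>i. x i \<le> \<tau>" and "antimono w" and w: "\<And>i. 0 \<le> w i"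
  shows "(\<Sum>i<K. x i * w i) \<le> (\<Sum>i<K. x i * w (i + D)) + \<tau> * (\<Sum>k<D. w k)"
proof -
  have shift: "w (i + D) \<le> w i" for i using \<open>antimono w\<close> by (simp add: antimono_def)
  have "(\<Sum>i<K. x i * w i) - (\<Sum>i<K. x i * w (i + D)) = (\<Sum>i<K. x i * (w i - w (i + D)))"
    by (simp add: sum_subtractf algebra_simps)
  also have "\<dots> \<le> (\<Sum>i<K. \<tau> * (w i - w (i + D)))"
    using x shift by (intro sum_mono mult_right_mono) auto
  also have "\<dots> = \<tau> * ((\<Sum>i<K. w i) - (\<Sum>i<K. w (i + D)))"
    by (simp add: sum_distrib_left sum_subtractf algebra_simps)
  also have "\<dots> \<le> \<tau> * (\<Sum>k<D. w k)"
  proof -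
    have "(\<Sum>i<K. w i) \<le> (\<Sum>k<D + K. w k)" using w by (intro sum_mono2) auto
    then show ?thesis
      using x order_trans[OF x] by (intro mult_left_mono) (auto simp: sum_lessThan_add_split)
  qed
  finally show ?thesis by simp
qed

lemma abs_tail_after_powr: "\<bar>tail_after N a j\<bar> powr p = (if j \<in> {..N} then 0 else \<bar>a j\<bar> powr p)"
  by (simp add: tail_after_def not_le)

(* Shifting the weights by N + 1 places costs at most tau * (w 0 + ... + w N); with the shifted
   weights, any arrangement of the entries beyond M is dominated by the greedy arrangement of a
   with the indices 0, ..., N removed. *)
lemma pw_pow_tail_after_le:
  fixes a w :: "nat \<Rightarrow> real"
  assumes a0: "a \<longlonglongrightarrow> 0" and "antimono w" and w: "\<And>i. 0 \<le> w i" and "0 \<le> p"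
    and "N \<le> M" and small: "\<And>j. M < j \<Longrightarrow> \<bar>a j\<bar> powr p \<le> \<tau>"
  shows "pw_pow p w (tail_after M a)
    \<le> greedy_sum p w a (tail_after N a) + ennreal (\<tau> * (\<Sum>k<Suc N. w k))"
  unfolding pw_pow_def
proof (rule SUP_least)
  fix \<sigma> :: "nat \<Rightarrow> nat" assume "\<sigma> \<in> {\<sigma>. bij \<sigma>}"
  then have "inj \<sigma>" by (simp add: bij_is_inj)
  define x where "x i = \<bar>tail_after M a (\<sigma> i)\<bar> powr p" for i
  define g where "g k = \<bar>tail_after N a (sigma_a a k)\<bar> powr p * w k" for k
  have "0 \<le> \<tau>" using small[of "Suc M"] powr_ge_zero[of "\<bar>a (Suc M)\<bar>" p] by linarith
  have x: "0 \<le> x i" "x i \<le> \<tau>" for i using \<open>0 \<le> \<tau>\<close> small by (auto simp: x_def tail_after_def)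
  show "(\<Sum>i. ennreal (x i * w i)) \<le> greedy_sum p w a (tail_after N a) + ennreal (\<tau> * (\<Sum>k<Suc N. w k))"
    unfolding suminf_eq_SUP
  proof (rule SUP_least)
    fix K
    have "(\<Sum>i<K. x i * w i) \<le> (\<Sum>i<K. x i * w (i + Suc N)) + \<tau> * (\<Sum>k<Suc N. w k)"
      by (rule weighted_sum_le_shifted_weighted_sum[OF x \<open>antimono w\<close> w])
    also have "(\<Sum>i<K. x i * w (i + Suc N)) \<le> (\<Sum>i<K. \<bar>tail_after N a (\<sigma> i)\<bar> powr p * w (i + Suc N))"
      using \<open>N \<le> M\<close> w by (intro sum_mono mult_right_mono) (auto simp: x_def tail_after_def)
    also have "\<dots> \<le> (\<Sum>k<Suc N + K. g k)"
      unfolding g_def abs_tail_after_powr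
      by (rule shifted_weighted_sum_le_greedy_sum[OF a0 \<open>0 \<le> p\<close> \<open>inj \<sigma>\<close> _ _ \<open>antimono w\<close> w]) simp_all
    finally have "ennreal (\<Sum>i<K. x i * w i)
        \<le> ennreal (\<Sum>k<Suc N + K. g k) + ennreal (\<tau> * (\<Sum>k<Suc N. w k))"
      using \<open>0 \<le> \<tau>\<close> w by (simp add: g_def ennreal_leI sum_nonneg flip: ennreal_plus)
    also have "ennreal (\<Sum>k<Suc N + K. g k) \<le> greedy_sum p w a (tail_after N a)"
      unfolding greedy_sum_def g_def using w by (intro ennreal_sum_le_suminf) simp
    finally show "(\<Sum>i<K. ennreal (x i * w i))
        \<le> greedy_sum p w a (tail_after N a) + ennreal (\<tau> * (\<Sum>k<Suc N. w k))"
      using x w by (simp add: add_right_mono)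
  qed
qed

lemma greedy_sum_tail_after_small:
  fixes c w :: "nat \<Rightarrow> real"
  assumes w: "weight_seq w" and "0 \<le> p" and "c \<in> Lpw p w" and "0 < \<epsilon>"
  obtains N where "greedy_sum p w c (tail_after N c) < ennreal \<epsilon>"
proof -
  have c0: "c \<longlonglongrightarrow> 0" by (rule Lpw_tendsto_zero[OF assms(1-3)])
  define h where "h k = \<bar>c (sigma_a c k)\<bar> powr p * w k" for k
  have h: "0 \<le> h k" for k by (simp add: h_def weight_seq_nonneg[OF w])
  have "(\<Sum>k. ennreal (h k)) = pw_pow p w c"
    unfolding h_def greedy_sum_def[symmetric]
    using pw_pow_eq_greedy_sum[OF c0 weight_seq_antimono[OF w] weight_seq_nonneg[OF w] \<open>0 \<le> p\<close>]
    by simp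
  also have "\<dots> < \<infinity>" using assms(3) by (simp add: Lpw_def)
  finally have "summable h" using h by (intro summable_suminf_not_top) auto
  then obtain K where K: "norm (\<Sum>k. h (k + K)) < \<epsilon>" using suminf_exist_split[OF \<open>0 < \<epsilon>\<close>] by blast
  obtain N where N: "\<And>k. k < K \<Longrightarrow> sigma_a c k \<le> N"
    using finite_nat_set_iff_bounded_le[of "sigma_a c ` {..<K}"] by auto
  define q where "q k = ennreal (\<bar>tail_after N c (sigma_a c k)\<bar> powr p * w k)" for k
  have "greedy_sum p w c (tail_after N c) = (\<Sum>k. q (k + K))"
    unfolding greedy_sum_def q_def[symmetric]
  proof (rule suminf_ennreal_comp_inj[symmetric])
    show "q k = 0" if "k \<notin> range (\<lambda>k. k + K)" for k
    proof -
      have "k < K" using that le_add_diff_inverse2 by (metis not_less rangeI)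
      then show ?thesis using N[of k] by (simp add: q_def tail_after_def)
    qed
  qed (simp add: inj_on_def)
  also have "\<dots> \<le> (\<Sum>k. ennreal (h (k + K)))"
    by (intro suminf_le) (auto simp: q_def h_def tail_after_def weight_seq_nonneg[OF w] ennreal_leI)
  also have "\<dots> < ennreal \<epsilon>"
    using K h \<open>summable h\<close> by (simp add: suminf_ennreal2 ennreal_lessI)
  finally show ?thesis using that by blast
qed

(* An entry a j with j > N and |a j|^p > theta either occupies one of the first r greedy positions,
   and then it alone makes the greedy tail beyond N at least theta * w r, or it is preceded by r
   entries at least as large, and then pw_pow a > B. *)
lemma entries_uniformly_small:
  fixes w :: "nat \<Rightarrow> real" and A :: "(nat \<Rightarrow> real) set"
  assumes w: "weight_seq w" and "0 < p" and A0: "\<And>a. a \<in> A \<Longrightarrow> a \<longlonglongrightarrow> 0"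
    and bound: "\<And>a. a \<in> A \<Longrightarrow> pw_pow p w a \<le> ennreal B" and "0 \<le> B"
    and tails: "\<And>\<epsilon>. 0 < \<epsilon> \<Longrightarrow> \<exists>N. \<forall>a\<in>A. greedy_sum p w a (tail_after N a) < ennreal \<epsilon>"
    and "0 < \<theta>"
  obtains M where "\<And>a j. a \<in> A \<Longrightarrow> M < j \<Longrightarrow> \<bar>a j\<bar> powr p \<le> \<theta>"
proof -
  obtain r where r: "B / \<theta> < (\<Sum>k<r. w k)" using weight_seq_partial_sums_unbounded[OF w] .
  obtain N where N: "\<And>a. a \<in> A \<Longrightarrow> greedy_sum p w a (tail_after N a) < ennreal (\<theta> * w r)"
    using tails[of "\<theta> * w r"] \<open>0 < \<theta>\<close> weight_seq_pos[OF w] by auto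
  have "\<bar>a j\<bar> powr p \<le> \<theta>" if "a \<in> A" and "N < j" for a j
  proof (rule ccontr)
    assume "\<not> \<bar>a j\<bar> powr p \<le> \<theta>"
    then have big: "\<theta> < \<bar>a j\<bar> powr p" by simp
    then have "a j \<noteq> 0" using \<open>0 < \<theta>\<close> by auto
    then obtain k where j: "j = sigma_a a k" using in_range_sigma_a[OF A0[OF \<open>a \<in> A\<close>]] by blast
    show False
    proof (cases "k < r")
      case True
      then have "w r \<le> w k" using weight_seq_antimono[OF w] by (simp add: antimono_def)
      then have "ennreal (\<theta> * w r) \<le> ennreal (\<bar>tail_after N a (sigma_a a k)\<bar> powr p * w k)"
        using big j \<open>N < j\<close> \<open>0 < \<theta>\<close> weight_seq_pos[OF w, of r]
        by (intro ennreal_leI mult_mono) (auto simp: tail_after_def)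
      then show False
        using ennreal_suminf_lessD[OF N[OF \<open>a \<in> A\<close>, unfolded greedy_sum_def], of k] by simp
    next
      case False
      have "\<theta> * w i \<le> \<bar>a (sigma_a a i)\<bar> powr p * w i" if "i < r" for i
      proof -
        have "\<bar>a j\<bar> \<le> \<bar>a (sigma_a a i)\<bar>"
          unfolding j using False that by (intro abs_sigma_a_antimono[OF A0[OF \<open>a \<in> A\<close>]]) simp
        then have "\<bar>a j\<bar> powr p \<le> \<bar>a (sigma_a a i)\<bar> powr p"
          using \<open>0 < p\<close> by (intro powr_mono2) auto
        then show ?thesis using big weight_seq_nonneg[OF w, of i] by (intro mult_right_mono) auto
      qed
      then have "B < (\<Sum>i<r. \<bar>a (sigma_a a i)\<bar> powr p * w i)"
        using r \<open>0 < \<theta>\<close> by (auto simp: field_simps sum_distrib_left intro: less_le_trans sum_mono)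
      then have "ennreal B < ennreal (\<Sum>i<r. \<bar>a (sigma_a a i)\<bar> powr p * w i)"
        using \<open>0 \<le> B\<close> by (intro ennreal_lessI) auto
      also have "\<dots> \<le> greedy_sum p w a a"
        unfolding greedy_sum_def using weight_seq_nonneg[OF w] by (intro ennreal_sum_le_suminf) simp
      also have "\<dots> = pw_pow p w a"
        using pw_pow_eq_greedy_sum[OF A0[OF \<open>a \<in> A\<close>] weight_seq_antimono[OF w] weight_seq_nonneg[OF w]]
          \<open>0 < p\<close> by simp
      finally show False using bound[OF \<open>a \<in> A\<close>] by simp
    qed
  qed
  then show ?thesis using that by blast
qed

lemma uniformly_small_tails:
  fixes w :: "nat \<Rightarrow> real" and A :: "(nat \<Rightarrow> real) set"
  assumes w: "weight_seq w" and "0 < p" and A0: "\<And>a. a \<in> A \<Longrightarrow> a \<longlonglongrightarrow> 0"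
    and bound: "\<And>a. a \<in> A \<Longrightarrow> pw_pow p w a \<le> ennreal B" and "0 \<le> B"
    and tails: "\<And>\<epsilon>. 0 < \<epsilon> \<Longrightarrow> \<exists>N. \<forall>a\<in>A. greedy_sum p w a (tail_after N a) < ennreal \<epsilon>"
    and "0 < \<epsilon>"
  obtains M where "\<And>a. a \<in> A \<Longrightarrow> pw_pow p w (tail_after M a) \<le> ennreal \<epsilon>"
proof -
  obtain N where N: "\<And>a. a \<in> A \<Longrightarrow> greedy_sum p w a (tail_after N a) < ennreal (\<epsilon> / 2)"
    using tails[of "\<epsilon> / 2"] \<open>0 < \<epsilon>\<close> by auto
  define W where "W = (\<Sum>k<Suc N. w k)"
  have "0 < W" unfolding W_def using weight_seq_pos[OF w] by (intro sum_pos) auto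
  then obtain M where M: "\<And>a j. a \<in> A \<Longrightarrow> M < j \<Longrightarrow> \<bar>a j\<bar> powr p \<le> \<epsilon> / (2 * W)"
    using entries_uniformly_small[OF w \<open>0 < p\<close> A0 bound \<open>0 \<le> B\<close> tails, of "\<epsilon> / (2 * W)"] \<open>0 < \<epsilon>\<close>
    by auto
  have "pw_pow p w (tail_after (max N M) a) \<le> ennreal \<epsilon>" if "a \<in> A" for a
  proof -
    have "pw_pow p w (tail_after (max N M) a)
        \<le> greedy_sum p w a (tail_after N a) + ennreal (\<epsilon> / (2 * W) * (\<Sum>k<Suc N. w k))"
      using M[OF that] \<open>0 < p\<close>
      by (intro pw_pow_tail_after_le[OF A0[OF that] weight_seq_antimono[OF w] weight_seq_nonneg[OF w]])
        auto
    also have "\<dots> \<le> ennreal (\<epsilon> / 2) + ennreal (\<epsilon> / 2)"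
      using N[OF that] \<open>0 < W\<close> unfolding W_def[symmetric] by (intro add_mono) auto
    also have "\<dots> = ennreal \<epsilon>" using \<open>0 < \<epsilon>\<close> by (simp flip: ennreal_plus)
    finally show ?thesis .
  qed
  then show ?thesis using that by blast
qed

lemma pw_pow_tail_after_small:
  fixes c w :: "nat \<Rightarrow> real"
  assumes w: "weight_seq w" and "0 < p" and c: "c \<in> Lpw p w" and "0 < \<epsilon>"
  obtains M where "pw_pow p w (tail_after M c) \<le> ennreal \<epsilon>"
proof -
  have "c \<longlonglongrightarrow> 0" using Lpw_tendsto_zero[OF w _ c] \<open>0 < p\<close> by simp
  moreover have "pw_pow p w c \<le> ennreal (enn2real (pw_pow p w c))"
    using c by (simp add: Lpw_def less_top)
  moreover have "\<exists>N. \<forall>a\<in>{c}. greedy_sum p w a (tail_after N a) < ennreal \<epsilon>'" if "0 < \<epsilon>'" for \<epsilon>'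
    using greedy_sum_tail_after_small[OF w _ c that] \<open>0 < p\<close> by (metis less_imp_le singletonD)
  ultimately obtain M where "\<And>a. a \<in> {c} \<Longrightarrow> pw_pow p w (tail_after M a) \<le> ennreal \<epsilon>"
    using uniformly_small_tails[OF w \<open>0 < p\<close>, of "{c}" "enn2real (pw_pow p w c)"] \<open>0 < \<epsilon>\<close> by auto
  then show ?thesis using that by blast
qed

lemma pw_pow_tail_after_antimono:
  fixes a w :: "nat \<Rightarrow> real"
  assumes "M \<le> i" and "\<And>i. 0 \<le> w i" and "0 \<le> p"
  shows "pw_pow p w (tail_after i a) \<le> pw_pow p w (tail_after M a)"
  using assms by (intro pw_pow_mono) (auto simp: tail_after_def)

section \<open>Precompactness\<close>

lemma bounded_pw_iff:
  assumes "0 < p" and "A \<subseteq> Lpw p w"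
  shows "bounded_pw p w A \<longleftrightarrow> (\<exists>B\<ge>0. \<forall>a\<in>A. pw_pow p w a \<le> ennreal B)"
proof
  assume "bounded_pw p w A"
  then obtain M where "\<And>a. a \<in> A \<Longrightarrow> normpw p w a \<le> max M 0"
    unfolding bounded_pw_def by (meson max.coboundedI1)
  then have "\<forall>a\<in>A. pw_pow p w a \<le> ennreal (max M 0 powr p)"
    using normpw_le_iff[OF \<open>0 < p\<close> max.cobounded2] assms(2) by blast
  then show "\<exists>B\<ge>0. \<forall>a\<in>A. pw_pow p w a \<le> ennreal B" by (meson powr_ge_zero)
next
  assume "\<exists>B\<ge>0. \<forall>a\<in>A. pw_pow p w a \<le> ennreal B"
  then obtain B where "0 \<le> B" and "\<And>a. a \<in> A \<Longrightarrow> pw_pow p w a \<le> ennreal ((B powr (1 / p)) powr p)"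
    using \<open>0 < p\<close> by (auto simp: powr_powr)
  then show "bounded_pw p w A"
    unfolding bounded_pw_def using normpw_le_iff[OF \<open>0 < p\<close>] assms(2) by (meson powr_ge_zero subsetD)
qed

lemma precompact_pw_imp_pw_pow_bounded:
  fixes w :: "nat \<Rightarrow> real" and A :: "(nat \<Rightarrow> real) set"
  assumes w: "weight_seq w" and "0 < p" and "A \<subseteq> Lpw p w" and "precompact_pw p w A"
  shows "\<exists>B\<ge>0. \<forall>a\<in>A. pw_pow p w a \<le> ennreal B"
proof -
  obtain F where "finite F" and F: "F \<subseteq> Lpw p w"
    and cover: "A \<subseteq> (\<Union>c\<in>F. {b \<in> Lpw p w. normpw p w (b - c) \<le> 1})"
    using assms(4) unfolding precompact_pw_def by (meson zero_less_one)
  define S where "S = (\<Sum>c\<in>F. enn2real (pw_pow p w c))"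
  have "0 \<le> S" unfolding S_def by (intro sum_nonneg) auto
  have "pw_pow p w a \<le> ennreal (2 powr p * (S + 1))" if "a \<in> A" for a
  proof -
    obtain c where "c \<in> F" and ac: "normpw p w (a - c) \<le> 1" using cover \<open>a \<in> A\<close> by blast
    have "a - c \<in> Lpw p w"
      using \<open>0 < p\<close> \<open>c \<in> F\<close> F \<open>a \<in> A\<close> assms(3) by (intro Lpw_diff[OF w]) auto
    then have "pw_pow p w (a - c) \<le> ennreal 1" using normpw_le_iff[OF \<open>0 < p\<close>] ac by simp
    moreover have "pw_pow p w c \<le> ennreal S"
    proof -
      have "pw_pow p w c = ennreal (enn2real (pw_pow p w c))"
        using \<open>c \<in> F\<close> F by (auto simp: Lpw_def)
      also have "\<dots> \<le> ennreal S"
        unfolding S_def using \<open>finite F\<close> \<open>c \<in> F\<close> by (intro ennreal_leI member_le_sum) auto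
      finally show ?thesis .
    qed
    ultimately have "pw_pow p w (\<lambda>j. c j + (a - c) j) \<le> ennreal (2 powr p * (S + 1))"
      using \<open>0 < p\<close> \<open>0 \<le> S\<close>
      by (intro pw_pow_add_le_real weight_seq_nonneg[OF w]) (auto simp: fun_diff_def)
    then show ?thesis by simp
  qed
  then show ?thesis using \<open>0 \<le> S\<close> by (intro exI[of _ "2 powr p * (S + 1)"]) auto
qed

lemma precompact_pw_imp_uniformly_small_tails:
  fixes w :: "nat \<Rightarrow> real" and A :: "(nat \<Rightarrow> real) set"
  assumes w: "weight_seq w" and "0 < p" and "A \<subseteq> Lpw p w" and "precompact_pw p w A" and "0 < \<epsilon>"
  obtains N where "\<And>a i. a \<in> A \<Longrightarrow> N \<le> i \<Longrightarrow> pw_pow p w (tail_after i a) \<le> ennreal \<epsilon>"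
proof -
  define e where "e = \<epsilon> / (2 * 2 powr p)"
  have "0 < e" using \<open>0 < \<epsilon>\<close> by (simp add: e_def)
  then have \<delta>: "0 < e powr (1 / p)" by simp
  obtain F where "finite F" and F: "F \<subseteq> Lpw p w"
    and cover: "A \<subseteq> (\<Union>c\<in>F. {b \<in> Lpw p w. normpw p w (b - c) \<le> e powr (1 / p)})"
    using assms(4)[unfolded precompact_pw_def, rule_format, OF \<delta>] by blast
  have "\<exists>M. pw_pow p w (tail_after M c) \<le> ennreal e" if "c \<in> F" for c
    using pw_pow_tail_after_small[OF w \<open>0 < p\<close> _ \<open>0 < e\<close>] F that by blast
  then obtain M where M: "\<And>c. c \<in> F \<Longrightarrow> pw_pow p w (tail_after (M c) c) \<le> ennreal e"
    by metis
  have "pw_pow p w (tail_after i a) \<le> ennreal \<epsilon>" if "a \<in> A" and "sum M F \<le> i" for a i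
  proof -
    obtain c where "c \<in> F" and ac: "normpw p w (a - c) \<le> e powr (1 / p)" using cover \<open>a \<in> A\<close> by blast
    have "a - c \<in> Lpw p w"
      using \<open>0 < p\<close> \<open>c \<in> F\<close> F \<open>a \<in> A\<close> assms(3) by (intro Lpw_diff[OF w]) auto
    then have "pw_pow p w (a - c) \<le> ennreal e"
      using normpw_le_iff[OF \<open>0 < p\<close>] ac \<open>0 < p\<close> \<open>0 < e\<close> by (simp add: powr_powr)
    moreover have "pw_pow p w (tail_after i (a - c)) \<le> pw_pow p w (a - c)"
      using \<open>0 < p\<close> weight_seq_nonneg[OF w] by (intro pw_pow_mono) (auto simp: tail_after_def)
    ultimately have "pw_pow p w (tail_after i (a - c)) \<le> ennreal e" by simp
    moreover have "pw_pow p w (tail_after i c) \<le> ennreal e"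
    proof -
      have "M c \<le> sum M F" using \<open>finite F\<close> \<open>c \<in> F\<close> by (intro member_le_sum) auto
      then have "pw_pow p w (tail_after i c) \<le> pw_pow p w (tail_after (M c) c)"
        using \<open>sum M F \<le> i\<close> \<open>0 < p\<close> weight_seq_nonneg[OF w] by (intro pw_pow_tail_after_antimono) auto
      then show ?thesis using M[OF \<open>c \<in> F\<close>] by simp
    qed
    ultimately have "pw_pow p w (\<lambda>j. tail_after i c j + tail_after i (a - c) j)
        \<le> ennreal (2 powr p * (e + e))"
      using \<open>0 < p\<close> \<open>0 < e\<close> by (intro pw_pow_add_le_real weight_seq_nonneg[OF w]) auto
    moreover have "(\<lambda>j. tail_after i c j + tail_after i (a - c) j) = tail_after i a"
      by (simp add: fun_eq_iff tail_after_def)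
    moreover have "2 powr p * (e + e) = \<epsilon>" by (simp add: e_def)
    ultimately show ?thesis by simp
  qed
  then show ?thesis using that by blast
qed

lemma precompact_pw_imp_uniformly_small_greedy_tails:
  fixes w :: "nat \<Rightarrow> real" and A :: "(nat \<Rightarrow> real) set"
  assumes w: "weight_seq w" and "0 < p" and A: "A \<subseteq> Lpw p w" and "precompact_pw p w A" and "0 < \<epsilon>"
  shows "\<exists>N. \<forall>a\<in>A. \<forall>i\<ge>N. greedy_sum p w a (tail_after i a) < ennreal \<epsilon>"
proof -
  obtain N where N: "\<And>a i. a \<in> A \<Longrightarrow> N \<le> i \<Longrightarrow> pw_pow p w (tail_after i a) \<le> ennreal (\<epsilon> / 2)"
    using precompact_pw_imp_uniformly_small_tails[OF w \<open>0 < p\<close> A \<open>precompact_pw p w A\<close>] \<open>0 < \<epsilon>\<close>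
    by (metis half_gt_zero)
  have "greedy_sum p w a (tail_after i a) < ennreal \<epsilon>" if "a \<in> A" and "N \<le> i" for a i
  proof -
    have "greedy_sum p w a (tail_after i a) \<le> pw_pow p w (tail_after i a)"
      using Lpw_tendsto_zero[OF w _ subsetD[OF A \<open>a \<in> A\<close>]] \<open>0 < p\<close> by (simp add: greedy_sum_le_pw_pow)
    also have "\<dots> \<le> ennreal (\<epsilon> / 2)" by (rule N[OF that])
    also have "\<dots> < ennreal \<epsilon>" using \<open>0 < \<epsilon>\<close> by (simp add: ennreal_lessI)
    finally show ?thesis .
  qed
  then show ?thesis by blast
qed

lemma uniformly_small_tail_sums_iff_greedy:
  fixes w :: "nat \<Rightarrow> real" and A :: "(nat \<Rightarrow> real) set"
  assumes w: "weight_seq w" and "0 < p" and A: "A \<subseteq> Lpw p w"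
  shows "(\<forall>\<epsilon>>0. \<exists>N::nat. \<forall>a\<in>A. \<forall>i\<ge>N.
        (\<Sum>j. ennreal (\<bar>a (j + Suc i)\<bar> powr p * w_inv w a (j + Suc i))) < ennreal \<epsilon>)
    \<longleftrightarrow> (\<forall>\<epsilon>>0. \<exists>N. \<forall>a\<in>A. \<forall>i\<ge>N. greedy_sum p w a (tail_after i a) < ennreal \<epsilon>)"
proof -
  have "a \<longlonglongrightarrow> 0" if "a \<in> A" for a
    using Lpw_tendsto_zero[OF w _ subsetD[OF A that]] \<open>0 < p\<close> by simp
  then show ?thesis by (simp only: tail_sum_eq_greedy_sum cong: ball_cong)
qed

lemma finite_grid_approximation:
  fixes M :: nat and C \<delta> :: real
  assumes "0 < \<delta>"
  obtains F :: "(nat \<Rightarrow> real) set" where "finite F" and "\<And>c j. c \<in> F \<Longrightarrow> M < j \<Longrightarrow> c j = 0"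
    and "\<And>a. (\<And>j. \<bar>a j\<bar> \<le> C) \<Longrightarrow> \<exists>c\<in>F. \<forall>j\<le>M. \<bar>a j - c j\<bar> \<le> \<delta>"
proof
  define K where "K = \<lceil>C / \<delta>\<rceil>"
  define grid where "grid f j = (if j \<le> M then \<delta> * of_int (f j) else 0)" for f :: "nat \<Rightarrow> int" and j
  let ?F = "grid ` PiE {..M} (\<lambda>_. {-K..K})"
  show "finite ?F" by (intro finite_imageI finite_PiE) auto
  show "c j = 0" if "c \<in> ?F" and "M < j" for c j using that by (auto simp: grid_def)
  show "\<exists>c\<in>?F. \<forall>j\<le>M. \<bar>a j - c j\<bar> \<le> \<delta>" if bound: "\<And>j. \<bar>a j\<bar> \<le> C" for a
  proof
    define f where "f = restrict (\<lambda>j. \<lfloor>a j / \<delta>\<rfloor>) {..M}"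
    have "\<lfloor>a j / \<delta>\<rfloor> \<in> {-K..K}" for j
    proof -
      have lower: "- (C / \<delta>) \<le> a j / \<delta>" and upper: "a j / \<delta> \<le> C / \<delta>"
        using bound[of j] \<open>0 < \<delta>\<close> by (auto simp: field_simps abs_le_iff)
      have "- K \<le> \<lfloor>a j / \<delta>\<rfloor>" unfolding K_def ceiling_def using floor_mono[OF lower] by simp
      moreover have "\<lfloor>a j / \<delta>\<rfloor> \<le> K"
        unfolding K_def floor_le_iff using upper le_of_int_ceiling[of "C / \<delta>"] by linarith
      ultimately show ?thesis by simp
    qed
    then show "grid f \<in> ?F" by (auto simp: f_def)
    show "\<forall>j\<le>M. \<bar>a j - grid f j\<bar> \<le> \<delta>"
    proof (intro allI impI)
      fix j assume "j \<le> M"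
      have "\<delta> * of_int \<lfloor>a j / \<delta>\<rfloor> \<le> \<delta> * (a j / \<delta>)"
        using \<open>0 < \<delta>\<close> by (intro mult_left_mono) auto
      moreover have "\<delta> * (a j / \<delta>) < \<delta> * (of_int \<lfloor>a j / \<delta>\<rfloor> + 1)"
        using \<open>0 < \<delta>\<close> by (intro mult_strict_left_mono) linarith+
      ultimately have "\<delta> * of_int \<lfloor>a j / \<delta>\<rfloor> \<le> a j" "a j < \<delta> * of_int \<lfloor>a j / \<delta>\<rfloor> + \<delta>"
        using \<open>0 < \<delta>\<close> by (simp_all add: distrib_left)
      then show "\<bar>a j - grid f j\<bar> \<le> \<delta>" using \<open>j \<le> M\<close> by (simp add: grid_def f_def)
    qed
  qed
qed

lemma abs_le_if_pw_pow_le: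
  fixes a w :: "nat \<Rightarrow> real"
  assumes "weight_seq w" and "0 < p" and "pw_pow p w a \<le> ennreal B" and "0 \<le> B"
  shows "\<bar>a j\<bar> \<le> B powr (1 / p)"
proof -
  have "ennreal (\<bar>a j\<bar> powr p) \<le> ennreal B"
    using abs_powr_le_pw_pow[OF assms(1)] assms(3) by (rule order_trans)
  then have "(\<bar>a j\<bar> powr p) powr (1 / p) \<le> B powr (1 / p)"
    using \<open>0 \<le> B\<close> \<open>0 < p\<close> by (intro powr_mono2) auto
  then show ?thesis using \<open>0 < p\<close> by (simp add: powr_powr)
qed

lemma bounded_small_greedy_tails_imp_precompact_pw:
  fixes w :: "nat \<Rightarrow> real" and A :: "(nat \<Rightarrow> real) set"
  assumes w: "weight_seq w" and "0 < p" and A: "A \<subseteq> Lpw p w"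
    and bound: "\<And>a. a \<in> A \<Longrightarrow> pw_pow p w a \<le> ennreal B" and "0 \<le> B"
    and tails: "\<And>\<epsilon>. 0 < \<epsilon> \<Longrightarrow> \<exists>N. \<forall>a\<in>A. greedy_sum p w a (tail_after N a) < ennreal \<epsilon>"
  shows "precompact_pw p w A"
  unfolding precompact_pw_def
proof (intro allI impI)
  fix \<eta> :: real assume "0 < \<eta>"
  define e where "e = \<eta> powr p / (2 * 2 powr p)"
  have "0 < e" using \<open>0 < \<eta>\<close> by (simp add: e_def)
  have "a \<longlonglongrightarrow> 0" if "a \<in> A" for a
    using Lpw_tendsto_zero[OF w _ subsetD[OF A that]] \<open>0 < p\<close> by simp
  then obtain M where M: "\<And>a. a \<in> A \<Longrightarrow> pw_pow p w (tail_after M a) \<le> ennreal e"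
    using uniformly_small_tails[OF w \<open>0 < p\<close> _ bound \<open>0 \<le> B\<close> tails \<open>0 < e\<close>] by blast
  define \<delta> where "\<delta> = (e / Suc M) powr (1 / p)"
  have "0 < \<delta>" using \<open>0 < e\<close> by (simp add: \<delta>_def)
  then obtain F where "finite F" and F0: "\<And>c j. c \<in> F \<Longrightarrow> M < j \<Longrightarrow> c j = 0"
    and approx: "\<And>a. (\<And>j. \<bar>a j\<bar> \<le> B powr (1 / p)) \<Longrightarrow> \<exists>c\<in>F. \<forall>j\<le>M. \<bar>a j - c j\<bar> \<le> \<delta>"
    using finite_grid_approximation[where M = M and C = "B powr (1 / p)"] by blast
  have "F \<subseteq> Lpw p w"
  proof
    fix c assume "c \<in> F"
    have "pw_pow p w c \<le> ennreal (\<Sum>j\<le>M. \<bar>c j\<bar> powr p)"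
      using F0[OF \<open>c \<in> F\<close>] by (rule pw_pow_le_sum_if_support[OF w])
    then show "c \<in> Lpw p w" by (simp add: Lpw_def order_le_less_trans)
  qed
  have "\<exists>c\<in>F. normpw p w (a - c) \<le> \<eta>" if a: "a \<in> A" for a
  proof -
    obtain c where "c \<in> F" and close: "\<forall>j\<le>M. \<bar>a j - c j\<bar> \<le> \<delta>"
      using approx abs_le_if_pw_pow_le[OF w \<open>0 < p\<close> bound[OF a] \<open>0 \<le> B\<close>] by blast
    define d where "d j = (if j \<le> M then a j - c j else 0)" for j
    have "(\<Sum>j\<le>M. \<bar>d j\<bar> powr p) \<le> (\<Sum>j\<le>M. \<delta> powr p)"
      using close \<open>0 < p\<close> by (intro sum_mono powr_mono2) (auto simp: d_def)
    also have "\<dots> = e" using \<open>0 < e\<close> \<open>0 < p\<close> by (simp add: \<delta>_def powr_powr)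
    finally have "pw_pow p w d \<le> ennreal e"
      using pw_pow_le_sum_if_support[OF w, of M d] by (force simp: d_def intro: order_trans ennreal_leI)
    then have "pw_pow p w (\<lambda>j. d j + tail_after M a j) \<le> ennreal (2 powr p * (e + e))"
      using M[OF a] \<open>0 < p\<close> \<open>0 < e\<close> by (intro pw_pow_add_le_real weight_seq_nonneg[OF w]) auto
    moreover have "(\<lambda>j. d j + tail_after M a j) = a - c"
      using F0[OF \<open>c \<in> F\<close>] by (auto simp: fun_eq_iff d_def tail_after_def)
    moreover have "2 powr p * (e + e) = \<eta> powr p" by (simp add: e_def)
    ultimately have "pw_pow p w (a - c) \<le> ennreal (\<eta> powr p)" by simp
    moreover have "a - c \<in> Lpw p w"
      using \<open>0 < p\<close> \<open>c \<in> F\<close> \<open>F \<subseteq> Lpw p w\<close> a A by (intro Lpw_diff[OF w]) auto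
    ultimately have "normpw p w (a - c) \<le> \<eta>"
      using normpw_le_iff[OF \<open>0 < p\<close> less_imp_le[OF \<open>0 < \<eta>\<close>]] by blast
    then show ?thesis using \<open>c \<in> F\<close> by blast
  qed
  then show "\<exists>F. finite F \<and> F \<subseteq> Lpw p w \<and> A \<subseteq> (\<Union>c\<in>F. {b \<in> Lpw p w. normpw p w (b - c) \<le> \<eta>})"
    using \<open>finite F\<close> \<open>F \<subseteq> Lpw p w\<close> A by (intro exI[of _ F]) auto
qed

theorem mainTheorem15:
  fixes p :: real and w :: "nat \<Rightarrow> real" and A :: "(nat \<Rightarrow> real) set"
  assumes "1 \<le> p" and "weight_seq w" and "A \<subseteq> Lpw p w"
  shows "precompact_pw p w A \<longleftrightarrow>
    (bounded_pw p w A \<and>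
     (\<forall>\<epsilon>>0. \<exists>N::nat. \<forall>a\<in>A. \<forall>i\<ge>N.
        (\<Sum>j. ennreal (\<bar>a (j + Suc i)\<bar> powr p * w_inv w a (j + Suc i))) < ennreal \<epsilon>))"
proof -
  have "0 < p" using assms(1) by simp
  show ?thesis
    unfolding uniformly_small_tail_sums_iff_greedy[OF assms(2) \<open>0 < p\<close> assms(3)]
      bounded_pw_iff[OF \<open>0 < p\<close> assms(3)]
  proof (intro iffI conjI allI impI)
    assume "precompact_pw p w A"
    then show "\<exists>B\<ge>0. \<forall>a\<in>A. pw_pow p w a \<le> ennreal B"
      by (rule precompact_pw_imp_pw_pow_bounded[OF assms(2) \<open>0 < p\<close> assms(3)])
    show "\<exists>N. \<forall>a\<in>A. \<forall>i\<ge>N. greedy_sum p w a (tail_after i a) < ennreal \<epsilon>" if "0 < \<epsilon>" for \<epsilon>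
      by (rule precompact_pw_imp_uniformly_small_greedy_tails[OF assms(2) \<open>0 < p\<close> assms(3)
            \<open>precompact_pw p w A\<close> that])
  next
    assume "(\<exists>B\<ge>0. \<forall>a\<in>A. pw_pow p w a \<le> ennreal B)
      \<and> (\<forall>\<epsilon>>0. \<exists>N. \<forall>a\<in>A. \<forall>i\<ge>N. greedy_sum p w a (tail_after i a) < ennreal \<epsilon>)"
    then show "precompact_pw p w A"
      using bounded_small_greedy_tails_imp_precompact_pw[OF assms(2) \<open>0 < p\<close> assms(3)] by (metis order_refl)
  qed
qed

end
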